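(* Let $N\ge 2$ and $K\ge 0$ be integers and let $f_0,f_1,\ldots,f_K$ be integers such that the map $f:\{0,1,\ldots,N-1\}\to\{0,1,\ldots,N-1\}$, $f(x)=\left(\sum_{i=0}^{K} f_i x^i\right) \bmod N$, is a permutation of $\{0,1,\ldots,N-1\}$. Then the interleaver $f$ is maximum contention-free.
   Context: An interleaver of length $N$ is a permutation $f$ of $\{0,1,\ldots,N-1\}$; let $g=f^{-1}$ denote its inverse (the deinterleaver). For a positive integer $W$ dividing $N$, put $M=N/W$. The interleaver $f$ is called contention-free for window size $W$ if for both $\pi=f$ and $\pi=g$ we have $\lfloor \pi(j+tW)/W\rfloor \neq \lfloor \pi(j+vW)/W\rfloor$ for all integers $j,t,v$ with $0\le j<W$ and $0\le t<v<M$. The interleaver is called maximum contention-free if it is contention-free for every window size $W$ that is a positive divisor of $N$. Here $a \bmod N$ denotes the representative of $a$ modulo $N$ in $\{0,\ldots,N-1\}$. *)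

theory Defs
  imports Main
begin

definition interleaver :: "nat \<Rightarrow> (nat \<Rightarrow> nat) \<Rightarrow> bool" where
  "interleaver N f \<longleftrightarrow> bij_betw f {0..<N} {0..<N}"

definition deinterleaver :: "nat \<Rightarrow> (nat \<Rightarrow> nat) \<Rightarrow> (nat \<Rightarrow> nat)" where
  "deinterleaver N f = inv_into {0..<N} f"

definition cf_condition :: "nat \<Rightarrow> nat \<Rightarrow> (nat \<Rightarrow> nat) \<Rightarrow> bool" where
  "cf_condition N W pi \<longleftrightarrow>
     (\<forall>j t v. j < W \<longrightarrow> t < v \<longrightarrow> v < N div W \<longrightarrow>
        pi (j + t * W) div W \<noteq> pi (j + v * W) div W)"

definition contention_free :: "nat \<Rightarrow> nat \<Rightarrow> (nat \<Rightarrow> nat) \<Rightarrow> bool" where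
  "contention_free N W f \<longleftrightarrow>
     cf_condition N W f \<and> cf_condition N W (deinterleaver N f)"

definition max_contention_free :: "nat \<Rightarrow> (nat \<Rightarrow> nat) \<Rightarrow> bool" where
  "max_contention_free N f \<longleftrightarrow>
     (\<forall>W. 0 < W \<longrightarrow> W dvd N \<longrightarrow> contention_free N W f)"

definition poly_interleaver :: "nat \<Rightarrow> nat \<Rightarrow> (nat \<Rightarrow> int) \<Rightarrow> nat \<Rightarrow> nat" where
  "poly_interleaver N K fs x = nat ((\<Sum>i\<le>K. fs i * int x ^ i) mod int N)"

end

theory Submission
  imports Defs "HOL-Number_Theory.Cong"
begin

text \<open>For every divisor W of N, reduction mod N commutes with reduction mod W, so a
polynomial permutation f of {0..<N} induces a map on residues mod W. That map is onto,
hence a bijection of the residues, so x and y are congruent mod W iff f x and f y are;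
the same then holds for the inverse permutation. A window j, j + W, j + 2W, ... consists
of distinct indices of one residue class, so their images are distinct numbers of one
residue class and therefore lie in distinct windows.\<close>

definition residue_compatible :: "nat \<Rightarrow> nat \<Rightarrow> (nat \<Rightarrow> nat) \<Rightarrow> bool" where
  "residue_compatible N W \<pi> \<longleftrightarrow>
     (\<forall>x<N. \<forall>y<N. [x = y] (mod W) \<longrightarrow> [\<pi> x = \<pi> y] (mod W))"

lemma window_index_less:
  fixes j t W N :: nat
  assumes "j < W" "t < N div W" "W dvd N"
  shows "j + t * W < N"
proof -
  have "Suc t * W \<le> N div W * W"
    using assms(2) by (intro mult_le_mono1) simp
  also have "\<dots> = N"
    using assms(3) by simp
  finally show ?thesis
    using assms(1) by simp
qed

lemma div_neq_if_cong_neq: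
  fixes a b W :: nat
  assumes "[a = b] (mod W)" "a \<noteq> b"
  shows "a div W \<noteq> b div W"
  using assms unfolding cong_def by (metis div_mult_mod_eq)

lemma cf_condition_if_residue_compatible:
  assumes "inj_on \<pi> {0..<N}" "W dvd N" "residue_compatible N W \<pi>"
  shows "cf_condition N W \<pi>"
  unfolding cf_condition_def
proof (intro allI impI)
  fix j t v
  assume jtv: "j < W" "t < v" "v < N div W"
  have idx: "j + t * W < N" "j + v * W < N"
    using jtv assms(2) window_index_less[of j W _ N] by auto
  have "j + t * W \<noteq> j + v * W"
    using jtv by simp
  then have "\<pi> (j + t * W) \<noteq> \<pi> (j + v * W)"
    using assms(1) idx by (simp add: inj_on_eq_iff)
  moreover have "[j + t * W = j + v * W] (mod W)"
    by (simp add: cong_def)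
  then have "[\<pi> (j + t * W) = \<pi> (j + v * W)] (mod W)"
    using assms(3) idx unfolding residue_compatible_def by blast
  ultimately show "\<pi> (j + t * W) div W \<noteq> \<pi> (j + v * W) div W"
    by (rule div_neq_if_cong_neq[rotated])
qed

lemma residue_compatible_reflects_cong:
  assumes "bij_betw \<pi> {0..<N} {0..<N}" "0 < W" "W dvd N" "residue_compatible N W \<pi>"
    and "a < N" "b < N" "[\<pi> a = \<pi> b] (mod W)"
  shows "[a = b] (mod W)"
proof -
  define h where "h r = \<pi> r mod W" for r
  have WN: "W \<le> N"
    using assms(2,3,5) by (simp add: dvd_imp_le)
  have h_residue: "h (x mod W) = \<pi> x mod W" if "x < N" for x
  proof -
    have "x mod W < N"
      using assms(2) WN by (meson mod_less_divisor order_less_le_trans)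
    moreover have "[x mod W = x] (mod W)"
      by (simp add: cong_def)
    ultimately have "[\<pi> (x mod W) = \<pi> x] (mod W)"
      using assms(4) that unfolding residue_compatible_def by blast
    then show ?thesis
      unfolding h_def cong_def .
  qed
  have "{0..<W} \<subseteq> h ` {0..<W}"
  proof
    fix c
    assume c: "c \<in> {0..<W}"
    then have "c \<in> \<pi> ` {0..<N}"
      using assms(1) WN by (auto simp: bij_betw_def)
    then obtain x where "x < N" "\<pi> x = c"
      by auto
    then have "h (x mod W) = c"
      using h_residue c by simp
    then show "c \<in> h ` {0..<W}"
      using assms(2) by force
  qed
  moreover have "h ` {0..<W} \<subseteq> {0..<W}"
    using assms(2) by (auto simp: h_def)
  ultimately have "inj_on h {0..<W}"
    by (simp add: eq_card_imp_inj_on)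
  moreover have "h (a mod W) = h (b mod W)"
    using h_residue assms(5-7) by (simp add: cong_def)
  ultimately show ?thesis
    using assms(2) unfolding cong_def by (auto dest: inj_onD)
qed

lemma residue_compatible_inv_into:
  assumes "bij_betw \<pi> {0..<N} {0..<N}" "0 < W" "W dvd N" "residue_compatible N W \<pi>"
  shows "residue_compatible N W (inv_into {0..<N} \<pi>)"
  unfolding residue_compatible_def
proof (intro allI impI)
  fix x y
  assume xy: "x < N" "y < N" "[x = y] (mod W)"
  let ?g = "inv_into {0..<N} \<pi>"
  have "?g x < N" "?g y < N"
    using bij_betw_inv_into[OF assms(1)] xy by (auto simp: bij_betw_def)
  moreover have "\<pi> (?g x) = x" "\<pi> (?g y) = y"
    using assms(1) xy by (auto simp: bij_betw_inv_into_right)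
  ultimately show "[?g x = ?g y] (mod W)"
    using residue_compatible_reflects_cong[OF assms] xy(3) by metis
qed

lemma poly_interleaver_cong:
  fixes N W K :: nat and fs :: "nat \<Rightarrow> int"
  assumes "0 < N" "W dvd N" "[x = y] (mod W)"
  shows "[poly_interleaver N K fs x = poly_interleaver N K fs y] (mod W)"
proof -
  let ?s = "\<lambda>x::nat. \<Sum>i\<le>K. fs i * int x ^ i"
  have "[int x = int y] (mod int W)"
    using assms(3) by (simp add: cong_int_iff)
  then have "[?s x = ?s y] (mod int W)"
    by (intro cong_sum cong_mult cong_pow cong_refl)
  moreover have "[?s z mod int N = ?s z] (mod int W)" for z
    using assms(2) by (simp add: cong_def mod_mod_cancel)
  ultimately have "[?s x mod int N = ?s y mod int N] (mod int W)"
    by (meson cong_sym cong_trans)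
  then have "[int (poly_interleaver N K fs x) = int (poly_interleaver N K fs y)] (mod int W)"
    using assms(1) by (simp add: poly_interleaver_def)
  then show ?thesis
    by (simp add: cong_int_iff)
qed

theorem corollary1:
  fixes N K :: nat and fs :: "nat \<Rightarrow> int"
  assumes "N \<ge> 2"
    and "interleaver N (poly_interleaver N K fs)"
  shows "max_contention_free N (poly_interleaver N K fs)"
  unfolding max_contention_free_def contention_free_def deinterleaver_def
proof (intro allI impI conjI)
  let ?f = "poly_interleaver N K fs"
  fix W :: nat
  assume W: "0 < W" "W dvd N"
  have bij: "bij_betw ?f {0..<N} {0..<N}"
    using assms(2) unfolding interleaver_def .
  have compat: "residue_compatible N W ?f"
    using assms(1) W(2) poly_interleaver_cong unfolding residue_compatible_def by simp
  show "cf_condition N W ?f"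
    using bij W(2) compat bij_betw_imp_inj_on cf_condition_if_residue_compatible by blast
  show "cf_condition N W (inv_into {0..<N} ?f)"
    using bij_betw_inv_into[OF bij] W(2) residue_compatible_inv_into[OF bij W compat]
    by (blast intro: cf_condition_if_residue_compatible bij_betw_imp_inj_on)
qed

end
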